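(* Let $\mathcal{F}$ and $\mathcal{G}$ be ${\rm LP}^{\rm MLN}$ programs over a finite propositional signature $\mathbf{p}$. Then $\mathcal{F}$ is strongly equivalent to $\mathcal{G}$ if and only if there is a w-expression $c$ such that for every interpretation $X\subseteq\mathbf{p}$: (1) $TW(\mathcal{F}_X) = c\times TW(\mathcal{G}_X)$ (as w-expressions), and (2) $(\overline{\mathcal{F}_X})^X$ and $(\overline{\mathcal{G}_X})^X$ are classically equivalent.
   Context: An ${\rm LP}^{\rm MLN}$ program is a finite set of weighted formulas $w:R$, where $R$ is a propositional formula over $\mathbf{p}$ (built from atoms, $\bot$, $\neg,\land,\lor,\rightarrow$) and $w$ is either a real number (a soft rule) or the symbol $\alpha$ denoting infinite weight (a hard rule). Interpretations are sets $X$ of atoms. For a program $\mathcal{F}$: $\overline{\mathcal{F}}$ is the set of formulas obtained by dropping the weights; $\mathcal{F}_X$ is the set of $w:R\in\mathcal{F}$ with $X\models R$. For a formula (or set of formulas) $F$, the reduct $F^X$ is obtained by replacing every maximal subformula of $F$ not satisfied by $X$ with $\bot$; $X$ is a stable model of a set of formulas $F$ if $X$ is a minimal (w.r.t. set inclusion) model of $F^X$. The set of soft stable models is $\mathrm{SM}[\mathcal{F}]=\{X \mid X \text{ is a stable model of } \overline{\mathcal{F}_X}\}$. A w-expression is an expression of the form $e^{c_1+c_2\alpha}$ with $c_1$ real and $c_2$ an integer; w-expressions are multiplied by adding exponents. $TW(\mathcal{F})=\exp(\sum_{w:R\in\mathcal{F}} w)$, a w-expression (soft weights summed into $c_1$,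 the number of hard rules giving $c_2$). The weight of $X$ is $W_{\mathcal{F}}(X)=TW(\mathcal{F}_X)$ if $X\in\mathrm{SM}[\mathcal{F}]$ and $0$ otherwise, and $P_{\mathcal{F}}(X)=\lim_{\alpha\to\infty} W_{\mathcal{F}}(X)/\sum_{Y\in\mathrm{SM}[\mathcal{F}]}W_{\mathcal{F}}(Y)$. Programs $\mathcal{F}$ and $\mathcal{G}$ are strongly equivalent if for every ${\rm LP}^{\rm MLN}$ program $\mathcal{H}$, $P_{\mathcal{F}\cup\mathcal{H}}(X)=P_{\mathcal{G}\cup\mathcal{H}}(X)$ for all interpretations $X$. *)

theory Defs
  imports Complex_Main "HOL-Library.Multiset"
begin

datatype 'a form =
    Atom 'a
  | Bot
  | Neg "'a form"
  | Conj "'a form" "'a form"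
  | Disj "'a form" "'a form"
  | Impl "'a form" "'a form"

fun sat :: "'a set \<Rightarrow> 'a form \<Rightarrow> bool" where
  "sat X (Atom a) = (a \<in> X)"
| "sat X Bot = False"
| "sat X (Neg f) = (\<not> sat X f)"
| "sat X (Conj f g) = (sat X f \<and> sat X g)"
| "sat X (Disj f g) = (sat X f \<or> sat X g)"
| "sat X (Impl f g) = (sat X f \<longrightarrow> sat X g)"

definition sat_set :: "'a set \<Rightarrow> 'a form set \<Rightarrow> bool" where
  "sat_set X S = (\<forall>f\<in>S. sat X f)"

fun reduct :: "'a set \<Rightarrow> 'a form \<Rightarrow> 'a form" where
  "reduct X f =
     (if \<not> sat X f then Bot else
      (case f of
         Atom a \<Rightarrow> Atom a
       | Bot \<Rightarrow> Bot
       | Neg g \<Rightarrow> Neg (reduct X g)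
       | Conj g h \<Rightarrow> Conj (reduct X g) (reduct X h)
       | Disj g h \<Rightarrow> Disj (reduct X g) (reduct X h)
       | Impl g h \<Rightarrow> Impl (reduct X g) (reduct X h)))"

definition reduct_set :: "'a set \<Rightarrow> 'a form set \<Rightarrow> 'a form set" where
  "reduct_set X S = reduct X ` S"

definition stable_model :: "'a set \<Rightarrow> 'a form set \<Rightarrow> bool" where
  "stable_model X S =
     (sat_set X (reduct_set X S) \<and> (\<forall>Y. Y \<subset> X \<longrightarrow> \<not> sat_set Y (reduct_set X S)))"

definition classically_equivalent :: "'a form set \<Rightarrow> 'a form set \<Rightarrow> bool" where
  "classically_equivalent S T = (\<forall>Y. sat_set Y S \<longleftrightarrow> sat_set Y T)"

datatype weight = Soft real | Hard  \<comment> \<open>Hard = the symbol alpha\<close>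

text \<open>A program is a finite collection of weighted formulas (a multiset, so that
  the union of programs adds up repeated rules).\<close>
type_synonym 'a program = "(weight \<times> 'a form) multiset"

text \<open>w-expressions e^(c1 + c2 alpha) represented by the pair (c1, c2).\<close>
type_synonym wexpr = "real \<times> int"

definition wmult :: "wexpr \<Rightarrow> wexpr \<Rightarrow> wexpr" where
  "wmult a b = (fst a + fst b, snd a + snd b)"

definition wval :: "wexpr \<Rightarrow> real \<Rightarrow> real" where
  "wval e \<alpha> = exp (fst e + real_of_int (snd e) * \<alpha>)"

definition wexp_of :: "weight \<Rightarrow> wexpr" where
  "wexp_of w = (case w of Soft r \<Rightarrow> (r, 0) | Hard \<Rightarrow> (0, 1))"

definition TW :: "'a program \<Rightarrow> wexpr" where
  "TW F = (\<Sum>r\<in>#F. fst (wexp_of (fst r)), \<Sum>r\<in>#F. snd (wexp_of (fst r)))"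

definition sat_part :: "'a program \<Rightarrow> 'a set \<Rightarrow> 'a program" where
  "sat_part F X = filter_mset (\<lambda>r. sat X (snd r)) F"

definition unweighted :: "'a program \<Rightarrow> 'a form set" where
  "unweighted F = snd ` set_mset F"

definition SM :: "'a program \<Rightarrow> 'a set set" where
  "SM F = {X. stable_model X (unweighted (sat_part F X))}"

definition W :: "'a program \<Rightarrow> 'a set \<Rightarrow> real \<Rightarrow> real" where
  "W F X \<alpha> = (if X \<in> SM F then wval (TW (sat_part F X)) \<alpha> else 0)"

definition Prob :: "'a program \<Rightarrow> 'a set \<Rightarrow> real" where
  "Prob F X = Lim at_top (\<lambda>\<alpha>. W F X \<alpha> / (\<Sum>Y\<in>SM F. W F Y \<alpha>))"

definition strongly_equivalent :: "'a program \<Rightarrow> 'a program \<Rightarrow> bool" where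
  "strongly_equivalent F G = (\<forall>H X. Prob (F + H) X = Prob (G + H) X)"

end

theory Submission
  imports Defs
begin

text \<open>Sufficiency: if the weights agree up to the factor c and the reducts are classically
  equivalent, then F + H and G + H have the same soft stable models and all their weights
  differ by the same positive factor, so the normalised weights coincide.

  Necessity is shown by adding hard rules that dominate every other rule in the limit
  \<alpha> \<rightarrow> \<infinity>. If Y \<subset> X is a model of the reduct of G at X but not of F, a formula that
  holds only at X, and whose reduct at X has Y as its only proper submodel, keeps X stable
  for F + H but not for G + H; with enough copies X then has probability 1 versus 0.
  For two interpretations X \<noteq> X', hard rules making exactly X and X' stable and dominant,
  with extra copies balancing the hard weights of F at X and X', force the same balance for
  G; comparing the resulting probabilities exp a / (exp a + exp b) recovers the soft weight
  differences.\<close>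

declare reduct.simps[simp del]

lemma reduct_Atom[simp]: "reduct X (Atom a) = (if a \<in> X then Atom a else Bot)"
  by (subst reduct.simps) auto

lemma reduct_Bot[simp]: "reduct X Bot = Bot"
  by (subst reduct.simps) auto

lemma reduct_Neg[simp]: "reduct X (Neg f) = (if sat X f then Bot else Neg (reduct X f))"
  by (subst reduct.simps) auto

lemma reduct_Conj[simp]:
  "reduct X (Conj f g) = (if sat X f \<and> sat X g then Conj (reduct X f) (reduct X g) else Bot)"
  by (subst reduct.simps) auto

lemma reduct_Disj[simp]:
  "reduct X (Disj f g) = (if sat X f \<or> sat X g then Disj (reduct X f) (reduct X g) else Bot)"
  by (subst reduct.simps) auto

lemma reduct_Impl[simp]:
  "reduct X (Impl f g) = (if sat X f \<longrightarrow> sat X g then Impl (reduct X f) (reduct X g) else Bot)"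
  by (subst reduct.simps) auto

lemma sat_of_sat_reduct: "sat Z (reduct X f) \<Longrightarrow> sat X f"
  by (cases "sat X f") (auto simp: reduct.simps)

lemma sat_reduct_self: "sat X f \<Longrightarrow> sat X (reduct X f)"
  by (induction f) (auto dest: sat_of_sat_reduct)

lemma sat_reduct_iff_Int: "sat Z (reduct X f) \<longleftrightarrow> sat (Z \<inter> X) (reduct X f)"
  by (induction f) auto

lemma sat_set_reduct_set_iff_Int: "sat_set Z (reduct_set X S) \<longleftrightarrow> sat_set (Z \<inter> X) (reduct_set X S)"
  unfolding sat_set_def reduct_set_def using sat_reduct_iff_Int by blast

definition conjL :: "'a form list \<Rightarrow> 'a form" where
  "conjL fs = foldr Conj fs (Neg Bot)"

definition disjL :: "'a form list \<Rightarrow> 'a form" where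
  "disjL fs = foldr Disj fs Bot"

lemma sat_conjL[simp]: "sat Z (conjL fs) \<longleftrightarrow> (\<forall>f\<in>set fs. sat Z f)"
  unfolding conjL_def by (induction fs) auto

lemma sat_disjL[simp]: "sat Z (disjL fs) \<longleftrightarrow> (\<exists>f\<in>set fs. sat Z f)"
  unfolding disjL_def by (induction fs) auto

lemma sat_reduct_conjL[simp]:
  "sat Z (reduct X (conjL fs)) \<longleftrightarrow> (\<forall>f\<in>set fs. sat X f \<and> sat Z (reduct X f))"
  unfolding conjL_def by (induction fs) (auto dest: sat_of_sat_reduct)

lemma sat_reduct_disjL[simp]: "sat Z (reduct X (disjL fs)) \<longleftrightarrow> (\<exists>f\<in>set fs. sat Z (reduct X f))"
  unfolding disjL_def by (induction fs) (auto dest: sat_of_sat_reduct)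

text \<open>The reduct at V of the conjunction of literals describing V only has models
  containing V; this is what makes each V \<in> S stable.\<close>

lemma exists_formula_with_models:
  fixes S :: "'a::finite set set"
  obtains f where "\<And>Z. sat Z f \<longleftrightarrow> Z \<in> S"
    and "\<And>V Z. V \<in> S \<Longrightarrow> Z \<subset> V \<Longrightarrow> \<not> sat Z (reduct V f)"
proof -
  obtain us where us: "set us = (UNIV :: 'a set)"
    using finite_list[of "UNIV :: 'a set"] by auto
  obtain vs where vs: "set vs = S"
    using finite_list[of S] by auto
  define lit :: "'a set \<Rightarrow> 'a \<Rightarrow> 'a form"
    where "lit V a = (if a \<in> V then Atom a else Neg (Atom a))" for V a
  define chi where "chi V = conjL (map (lit V) us)" for V
  have sat_chi: "sat Z (chi V) \<longleftrightarrow> Z = V" for Z V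
  proof -
    have "sat Z (chi V) \<longleftrightarrow> (\<forall>a. sat Z (lit V a))"
      by (simp add: chi_def us)
    then show ?thesis
      by (auto simp: lit_def split: if_splits)
  qed
  have sat_reduct_chi: "sat Z (reduct V (chi V)) \<longleftrightarrow> V \<subseteq> Z" for Z V
  proof -
    have "sat Z (reduct V (chi V)) \<longleftrightarrow> (\<forall>a. sat V (lit V a) \<and> sat Z (reduct V (lit V a)))"
      by (simp add: chi_def us)
    then show ?thesis
      by (auto simp: lit_def split: if_splits)
  qed
  define f where "f = disjL (map chi vs)"
  have "sat Z f \<longleftrightarrow> Z \<in> S" for Z
    by (auto simp: f_def vs sat_chi)
  moreover have "\<not> sat Z (reduct V f)" if "V \<in> S" "Z \<subset> V" for V Z
  proof
    assume "sat Z (reduct V f)"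
    then obtain W where "sat Z (reduct V (chi W))"
      by (auto simp: f_def)
    moreover from this have "W = V"
      using sat_of_sat_reduct sat_chi by blast
    ultimately show False
      using sat_reduct_chi \<open>Z \<subset> V\<close> by blast
  qed
  ultimately show ?thesis
    using that by blast
qed

text \<open>The implication forces every atom of X - Y once one of them is present, and the
  double negated atom of X - Y disappears from the reduct.\<close>

lemma exists_formula_with_reduct_model:
  fixes X Y :: "'a::finite set"
  assumes "Y \<subset> X"
  obtains \<psi> where "\<And>Z. sat Z \<psi> \<longleftrightarrow> Z = X"
    and "\<And>Z. Z \<subset> X \<Longrightarrow> sat Z (reduct X \<psi>) \<longleftrightarrow> Z = Y"
proof -
  obtain ys where ys: "set ys = Y" using finite_list[of Y] by auto
  obtain ns where ns: "set ns = - X" using finite_list[of "- X"] by auto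
  obtain ds where ds: "set ds = X - Y" using finite_list[of "X - Y"] by auto
  obtain a\<^sub>0 where a\<^sub>0: "a\<^sub>0 \<in> X - Y" using assms by auto
  define \<psi> where "\<psi> = conjL [conjL (map Atom ys), conjL (map (\<lambda>a. Neg (Atom a)) ns),
     Impl (disjL (map Atom ds)) (conjL (map Atom ds)), Neg (Neg (Atom a\<^sub>0))]"
  have "sat Z \<psi> \<longleftrightarrow> Z = X" for Z
  proof
    assume "sat Z \<psi>"
    then have "Y \<subseteq> Z" "Z \<subseteq> X" "a\<^sub>0 \<in> Z" "(\<exists>d\<in>X - Y. d \<in> Z) \<longrightarrow> X - Y \<subseteq> Z"
      by (auto simp: \<psi>_def ys ns ds)
    then show "Z = X" using a\<^sub>0 by blast
  qed (use assms a\<^sub>0 in \<open>auto simp: \<psi>_def ys ns ds\<close>)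
  moreover have "sat Z (reduct X \<psi>) \<longleftrightarrow> Z = Y" if "Z \<subset> X" for Z
  proof
    assume "sat Z (reduct X \<psi>)"
    then have "Y \<subseteq> Z" "(\<exists>d\<in>X - Y. d \<in> Z) \<longrightarrow> X - Y \<subseteq> Z"
      using assms a\<^sub>0 \<open>Z \<subset> X\<close> by (auto simp: \<psi>_def ys ns ds)
    then show "Z = Y" using \<open>Z \<subset> X\<close> by blast
  qed (use assms a\<^sub>0 \<open>Z \<subset> X\<close> in \<open>auto simp: \<psi>_def ys ns ds\<close>)
  ultimately show ?thesis
    using that by blast
qed

abbreviation program_reduct :: "'a program \<Rightarrow> 'a set \<Rightarrow> 'a form set" where
  "program_reduct P X \<equiv> reduct_set X (unweighted (sat_part P X))"

abbreviation soft_weight :: "'a program \<Rightarrow> 'a set \<Rightarrow> real" where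
  "soft_weight P X \<equiv> fst (TW (sat_part P X))"

abbreviation hard_count :: "'a program \<Rightarrow> 'a set \<Rightarrow> int" where
  "hard_count P X \<equiv> snd (TW (sat_part P X))"

lemma sat_part_plus[simp]: "sat_part (A + B) X = sat_part A X + sat_part B X"
  by (simp add: sat_part_def)

lemma unweighted_plus[simp]: "unweighted (A + B) = unweighted A \<union> unweighted B"
  by (simp add: unweighted_def image_Un)

lemma TW_plus: "TW (A + B) = wmult (TW A) (TW B)"
  by (simp add: TW_def wmult_def)

lemma wval_wmult: "wval (wmult a b) \<alpha> = wval a \<alpha> * wval b \<alpha>"
  by (simp add: wval_def wmult_def exp_add[symmetric] algebra_simps)

lemma TW_snd_nonneg: "0 \<le> snd (TW P)"
  unfolding TW_def by (induction P) (auto simp: wexp_of_def split: weight.splits)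

lemma TW_snd_le_size: "snd (TW P) \<le> int (size P)"
proof -
  have "snd (TW P) = (\<Sum>r\<in>#P. snd (wexp_of (fst r)))"
    by (simp add: TW_def)
  also have "\<dots> \<le> (\<Sum>r\<in>#P. 1)"
    by (rule sum_mset_mono) (auto simp: wexp_of_def split: weight.splits)
  also have "\<dots> = int (size P)"
    by (induction P) auto
  finally show ?thesis .
qed

lemma hard_count_le_size: "hard_count P X \<le> int (size P)"
  using TW_snd_le_size[of "sat_part P X"] size_filter_mset_lesseq[of "\<lambda>r. sat X (snd r)" P]
  unfolding sat_part_def by linarith

lemma sat_part_replicate_mset:
  "sat_part (replicate_mset K r) X = (if sat X (snd r) then replicate_mset K r else {#})"
  by (induction K) (auto simp: sat_part_def)

lemma TW_sat_part_plus_Hard: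
  "TW (sat_part (P + replicate_mset K (Hard, \<psi>)) Z) =
     wmult (TW (sat_part P Z)) (0, if sat Z \<psi> then int K else 0)"
  by (simp add: sat_part_replicate_mset TW_plus TW_def wexp_of_def wmult_def)

lemma unweighted_sat_part_plus_Hard:
  assumes "sat X \<psi>" "K \<noteq> 0"
  shows "unweighted (sat_part (P + replicate_mset K (Hard, \<psi>)) X) = insert \<psi> (unweighted (sat_part P X))"
  using assms by (auto simp: sat_part_replicate_mset unweighted_def)

lemma program_reduct_plus: "program_reduct (A + B) X = program_reduct A X \<union> program_reduct B X"
  by (simp add: reduct_set_def image_Un)

lemma sat_set_Un: "sat_set Z (A \<union> B) \<longleftrightarrow> sat_set Z A \<and> sat_set Z B"
  by (auto simp: sat_set_def)

lemma sat_set_program_reduct_self: "sat_set X (program_reduct P X)"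
  by (auto simp: sat_set_def reduct_set_def unweighted_def sat_part_def intro: sat_reduct_self)

lemma mem_SM_iff: "X \<in> SM P \<longleftrightarrow> (\<forall>Z. Z \<subset> X \<longrightarrow> \<not> sat_set Z (program_reduct P X))"
  using sat_set_program_reduct_self by (auto simp: SM_def stable_model_def)

lemma mem_SM_if_rule_without_submodels:
  assumes "f \<in> unweighted (sat_part P X)" and "\<And>Z. Z \<subset> X \<Longrightarrow> \<not> sat Z (reduct X f)"
  shows "X \<in> SM P"
  using assms unfolding mem_SM_iff sat_set_def reduct_set_def by blast

subsection \<open>Probabilities in the limit\<close>

lemma tendsto_exp_affine_neg_slope:
  fixes k r :: real
  assumes "k < 0"
  shows "((\<lambda>x. exp (r + k * x)) \<longlongrightarrow> 0) at_top"
proof -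
  have "filterlim (\<lambda>x. k * x) at_bot at_top"
    using assms by (intro filterlim_cmult_at_bot_at_top[OF filterlim_ident]) auto
  then have "filterlim (\<lambda>x. r + k * x) at_bot at_top"
    by (simp add: filterlim_tendsto_add_at_bot_iff[OF tendsto_const])
  then show ?thesis by (rule filterlim_compose[OF exp_at_bot])
qed

lemma Prob_not_in_SM: "X \<notin> SM P \<Longrightarrow> Prob P X = 0"
  unfolding Prob_def W_def by (simp add: tendsto_Lim)

text \<open>Dividing all weights by exp (M \<alpha>) leaves the quotient unchanged; afterwards the stable models
  of maximal hard count M keep their soft weight and the others vanish.\<close>

lemma Prob_eq_if_max_hard_count:
  fixes P :: "('a::finite) program"
  assumes "T \<subseteq> SM P" "T \<noteq> {}"
    and max: "\<And>Y. Y \<in> T \<Longrightarrow> hard_count P Y = M"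
    and below: "\<And>Y. Y \<in> SM P - T \<Longrightarrow> hard_count P Y < M"
  shows "Prob P X = (if X \<in> T then exp (soft_weight P X) / (\<Sum>Y\<in>T. exp (soft_weight P Y)) else 0)"
proof -
  define g where "g Y \<alpha> = W P Y \<alpha> * exp (- real_of_int M * \<alpha>)" for Y \<alpha>
  define l where "l Y = (if Y \<in> T then exp (soft_weight P Y) else 0)" for Y
  have g_tendsto: "(g Y \<longlongrightarrow> l Y) at_top" for Y
  proof (cases "Y \<in> SM P")
    case False
    with \<open>T \<subseteq> SM P\<close> have "g Y = (\<lambda>_. 0)" "l Y = 0"
      by (auto simp: g_def W_def l_def)
    then show ?thesis by simp
  next
    case True
    then have g_eq: "g Y = (\<lambda>\<alpha>. exp (soft_weight P Y + real_of_int (hard_count P Y - M) * \<alpha>))"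
      by (auto simp: g_def W_def wval_def algebra_simps exp_add[symmetric])
    show ?thesis
    proof (cases "Y \<in> T")
      case True
      then show ?thesis by (simp add: g_eq l_def max)
    next
      case False
      with below \<open>Y \<in> SM P\<close> have "real_of_int (hard_count P Y - M) < 0" by simp
      with False show ?thesis unfolding g_eq l_def by (simp only: tendsto_exp_affine_neg_slope if_False)
    qed
  qed
  have sum_l: "(\<Sum>Y\<in>SM P. l Y) = (\<Sum>Y\<in>T. exp (soft_weight P Y))"
    using \<open>T \<subseteq> SM P\<close> by (simp add: l_def sum.If_cases inf.absorb2)
  have "(\<Sum>Y\<in>T. exp (soft_weight P Y)) > 0"
    using assms(1,2) by (intro sum_pos) (auto intro: finite_subset)
  then have "((\<lambda>\<alpha>. g X \<alpha> / (\<Sum>Y\<in>SM P. g Y \<alpha>)) \<longlongrightarrow> l X / (\<Sum>Y\<in>T. exp (soft_weight P Y))) at_top"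
    by (auto intro!: tendsto_divide tendsto_sum g_tendsto simp: sum_l[symmetric])
  moreover have "(\<lambda>\<alpha>. W P X \<alpha> / (\<Sum>Y\<in>SM P. W P Y \<alpha>)) = (\<lambda>\<alpha>. g X \<alpha> / (\<Sum>Y\<in>SM P. g Y \<alpha>))"
    by (rule ext) (simp add: g_def sum_distrib_right[symmetric])
  ultimately show ?thesis
    unfolding Prob_def by (subst tendsto_Lim) (auto simp: l_def)
qed

lemma Prob_eq_1_if_max_hard_count:
  fixes P :: "('a::finite) program"
  assumes "X \<in> SM P" and "\<And>Y. Y \<in> SM P - {X} \<Longrightarrow> hard_count P Y < hard_count P X"
  shows "Prob P X = 1"
  using Prob_eq_if_max_hard_count[of "{X}" P "hard_count P X" X] assms by simp

lemma Prob_of_two_max_hard_counts: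
  fixes P :: "('a::finite) program"
  assumes "X \<noteq> X'" "X \<in> SM P" "X' \<in> SM P"
    and below: "\<And>Z. Z \<in> SM P - {X, X'} \<Longrightarrow>
                  hard_count P Z < hard_count P X \<and> hard_count P Z < hard_count P X'"
  shows "Prob P X = (if hard_count P X = hard_count P X'
           then exp (soft_weight P X) / (exp (soft_weight P X) + exp (soft_weight P X'))
           else if hard_count P X > hard_count P X' then 1 else 0)"
proof -
  consider "hard_count P X = hard_count P X'" | "hard_count P X > hard_count P X'"
    | "hard_count P X < hard_count P X'" by linarith
  then show ?thesis
  proof cases
    case 1
    have "Y \<in> {X, X'} \<Longrightarrow> hard_count P Y = hard_count P X" for Y
      using 1 by auto
    then have "Prob P X = (if X \<in> {X, X'} then exp (soft_weight P X) /
        (\<Sum>Y\<in>{X, X'}. exp (soft_weight P Y)) else 0)"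
      using Prob_eq_if_max_hard_count[of "{X, X'}" P "hard_count P X"] assms(2,3) below by blast
    with 1 \<open>X \<noteq> X'\<close> show ?thesis by simp
  next
    case 2
    have "hard_count P Y < hard_count P X" if "Y \<in> SM P - {X}" for Y
      using that 2 below by (cases "Y = X'") auto
    then have "Prob P X = 1"
      using Prob_eq_1_if_max_hard_count assms(2) by blast
    with 2 show ?thesis by simp
  next
    case 3
    have "hard_count P Y < hard_count P X'" if "Y \<in> SM P - {X'}" for Y
      using that 3 below by (cases "Y = X") auto
    then have "Prob P X = (if X \<in> {X'} then exp (soft_weight P X) /
        (\<Sum>Y\<in>{X'}. exp (soft_weight P Y)) else 0)"
      using Prob_eq_if_max_hard_count[of "{X'}" P "hard_count P X'"] assms(3) by blast
    with 3 \<open>X \<noteq> X'\<close> show ?thesis by simp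
  qed
qed

subsection \<open>Sufficiency\<close>

lemma strongly_equivalent_if_TW_and_reducts_agree:
  assumes agree: "\<And>X. TW (sat_part F X) = wmult c (TW (sat_part G X)) \<and>
                       classically_equivalent (program_reduct F X) (program_reduct G X)"
  shows "strongly_equivalent F G"
  unfolding strongly_equivalent_def
proof (intro allI)
  fix H X
  have SM_eq: "SM (F + H) = SM (G + H)"
    using agree unfolding set_eq_iff mem_SM_iff classically_equivalent_def program_reduct_plus
    by (simp add: sat_set_Un)
  have W_eq: "W (F + H) Y \<alpha> = wval c \<alpha> * W (G + H) Y \<alpha>" for Y \<alpha>
    using agree SM_eq unfolding W_def by (simp add: TW_plus wval_wmult)
  have "wval c \<alpha> \<noteq> 0" for \<alpha>
    by (simp add: wval_def)
  then show "Prob (F + H) X = Prob (G + H) X"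
    unfolding Prob_def by (simp add: W_eq SM_eq sum_distrib_left[symmetric])
qed

subsection \<open>Necessity\<close>

lemma strongly_equivalent_sym: "strongly_equivalent F G \<Longrightarrow> strongly_equivalent G F"
  unfolding strongly_equivalent_def by metis

lemma sat_program_reduct_if_strongly_equivalent:
  fixes F G :: "('a::finite) program"
  assumes SE: "strongly_equivalent F G" and "Y \<subset> X"
    and Y_model: "sat_set Y (program_reduct G X)"
  shows "sat_set Y (program_reduct F X)"
proof (rule ccontr)
  assume Y_not_model: "\<not> sat_set Y (program_reduct F X)"
  obtain \<psi> where sat_\<psi>: "\<And>Z. sat Z \<psi> \<longleftrightarrow> Z = X"
    and sat_reduct_\<psi>: "\<And>Z. Z \<subset> X \<Longrightarrow> sat Z (reduct X \<psi>) \<longleftrightarrow> Z = Y"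
    using exists_formula_with_reduct_model[OF \<open>Y \<subset> X\<close>] by blast
  define K where "K = size F + 1"
  define H where "H = replicate_mset K (Hard, \<psi>)"
  have X_stable_iff: "X \<in> SM (P + H) \<longleftrightarrow> \<not> sat_set Y (program_reduct P X)" for P
  proof -
    have "unweighted (sat_part (P + H) X) = insert \<psi> (unweighted (sat_part P X))"
      unfolding H_def using sat_\<psi> by (intro unweighted_sat_part_plus_Hard) (auto simp: K_def)
    then have "program_reduct (P + H) X = insert (reduct X \<psi>) (program_reduct P X)"
      by (simp add: reduct_set_def)
    then have "X \<in> SM (P + H) \<longleftrightarrow>
        (\<forall>Z. Z \<subset> X \<longrightarrow> \<not> (sat_set Z (program_reduct P X) \<and> sat Z (reduct X \<psi>)))"
      unfolding mem_SM_iff by (simp add: sat_set_def conj_commute)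
    also have "\<dots> \<longleftrightarrow> \<not> sat_set Y (program_reduct P X)"
      using sat_reduct_\<psi> \<open>Y \<subset> X\<close> by blast
    finally show ?thesis .
  qed
  have hard_count_H: "hard_count (F + H) Z = hard_count F Z + (if Z = X then int K else 0)" for Z
    unfolding H_def TW_sat_part_plus_Hard by (simp add: sat_\<psi> wmult_def)
  have "Prob (F + H) X = 1"
  proof (rule Prob_eq_1_if_max_hard_count)
    show "X \<in> SM (F + H)"
      using X_stable_iff Y_not_model by blast
    show "hard_count (F + H) Z < hard_count (F + H) X" if "Z \<in> SM (F + H) - {X}" for Z
      using that hard_count_le_size[of F Z] TW_snd_nonneg[of "sat_part F X"]
      unfolding hard_count_H by (simp add: K_def)
  qed
  moreover have "Prob (G + H) X = 0"
    using X_stable_iff Y_model Prob_not_in_SM by blast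
  moreover have "Prob (F + H) X = Prob (G + H) X"
    using SE by (simp add: strongly_equivalent_def)
  ultimately show False by simp
qed

lemma program_reducts_equivalent_if_strongly_equivalent:
  fixes F G :: "('a::finite) program"
  assumes SE: "strongly_equivalent F G"
  shows "classically_equivalent (program_reduct F X) (program_reduct G X)"
  unfolding classically_equivalent_def
proof
  fix Z
  show "sat_set Z (program_reduct F X) \<longleftrightarrow> sat_set Z (program_reduct G X)"
  proof (cases "Z \<inter> X = X")
    case True
    then show ?thesis
      by (simp only: sat_set_reduct_set_iff_Int[of Z] sat_set_program_reduct_self)
  next
    case False
    then have "Z \<inter> X \<subset> X" by blast
    then show ?thesis
      using sat_program_reduct_if_strongly_equivalent[OF SE]
        sat_program_reduct_if_strongly_equivalent[OF strongly_equivalent_sym[OF SE]]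
      by (simp only: sat_set_reduct_set_iff_Int[of Z]) blast
  qed
qed

text \<open>The K copies of B make X and X' the dominant stable models; the m and m' copies
  of \<phi> and \<phi>' shift their hard counts without affecting stability.\<close>

lemma Prob_plus_two_point_bonus:
  fixes P :: "('a::finite) program" and K m m' :: nat
  assumes "X \<noteq> X'" "size P < K"
    and sat_B: "\<And>Z. sat Z B \<longleftrightarrow> Z \<in> {X, X'}"
    and stable_B: "\<And>V Z. V \<in> {X, X'} \<Longrightarrow> Z \<subset> V \<Longrightarrow> \<not> sat Z (reduct V B)"
    and sat_\<phi>: "\<And>Z. sat Z \<phi> \<longleftrightarrow> Z \<in> {X}" and sat_\<phi>': "\<And>Z. sat Z \<phi>' \<longleftrightarrow> Z \<in> {X'}"
  defines "Q \<equiv> P + replicate_mset K (Hard, B) + replicate_mset m (Hard, \<phi>) + replicate_mset m' (Hard, \<phi>')"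
  shows "Prob Q X =
    (if hard_count P X + m = hard_count P X' + m'
     then exp (soft_weight P X) / (exp (soft_weight P X) + exp (soft_weight P X'))
     else if hard_count P X + m > hard_count P X' + m' then 1 else 0)"
proof -
  have TW_Q: "TW (sat_part Q Z) = wmult (TW (sat_part P Z))
     (0, (if Z \<in> {X, X'} then int K else 0) + (if Z = X then int m else 0) + (if Z = X' then int m' else 0))"
    for Z
    unfolding Q_def TW_sat_part_plus_Hard by (simp add: sat_B sat_\<phi> sat_\<phi>' wmult_def)
  have "V \<in> SM Q" if "V \<in> {X, X'}" for V
  proof (rule mem_SM_if_rule_without_submodels)
    show "B \<in> unweighted (sat_part Q V)"
      using that sat_B \<open>size P < K\<close>
      by (auto simp: Q_def unweighted_def sat_part_replicate_mset)
  qed (use that stable_B in blast)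
  moreover
  have hard_Q: "hard_count Q Z = hard_count P Z + (if Z \<in> {X, X'} then int K else 0)
      + (if Z = X then int m else 0) + (if Z = X' then int m' else 0)"
    and soft_Q: "soft_weight Q Z = soft_weight P Z" for Z
    by (simp_all add: TW_Q wmult_def)
  have "hard_count Q Z < hard_count Q X \<and> hard_count Q Z < hard_count Q X'"
    if "Z \<in> SM Q - {X, X'}" for Z
  proof -
    have "hard_count Q Z \<le> int (size P)"
      using that hard_count_le_size[of P Z] by (simp add: hard_Q)
    moreover have "int K \<le> hard_count Q X" "int K \<le> hard_count Q X'"
      using TW_snd_nonneg[of "sat_part P X"] TW_snd_nonneg[of "sat_part P X'"] \<open>X \<noteq> X'\<close>
      by (simp_all add: hard_Q)
    ultimately show ?thesis
      using \<open>size P < K\<close> by linarith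
  qed
  ultimately have "Prob Q X = (if hard_count Q X = hard_count Q X'
           then exp (soft_weight Q X) / (exp (soft_weight Q X) + exp (soft_weight Q X'))
           else if hard_count Q X > hard_count Q X' then 1 else 0)"
    using Prob_of_two_max_hard_counts[OF \<open>X \<noteq> X'\<close>] by blast
  moreover have "hard_count Q X = hard_count P X + K + m" "hard_count Q X' = hard_count P X' + K + m'"
    using \<open>X \<noteq> X'\<close> by (simp_all add: hard_Q)
  ultimately show ?thesis
    by (simp add: soft_Q)
qed

lemma diff_eq_if_exp_ratio_eq:
  fixes a b c d :: real
  assumes "exp a / (exp a + exp b) = exp c / (exp c + exp d)"
  shows "a - b = c - d"
proof -
  have "exp a + exp b > 0" "exp c + exp d > 0"
    by (simp_all add: add_pos_pos)
  then have "exp a * (exp c + exp d) = exp c * (exp a + exp b)"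
    using assms by (simp add: field_simps)
  then have "exp (a + d) = exp (c + b)"
    by (simp add: exp_add algebra_simps)
  then show ?thesis by simp
qed

lemma TW_cross_eq_if_strongly_equivalent:
  fixes F G :: "('a::finite) program"
  assumes SE: "strongly_equivalent F G"
  shows "wmult (TW (sat_part F X)) (TW (sat_part G X')) = wmult (TW (sat_part F X')) (TW (sat_part G X))"
proof (cases "X = X'")
  case False
  obtain B where sat_B: "\<And>Z. sat Z B \<longleftrightarrow> Z \<in> {X, X'}"
    and stable_B: "\<And>V Z. V \<in> {X, X'} \<Longrightarrow> Z \<subset> V \<Longrightarrow> \<not> sat Z (reduct V B)"
    using exists_formula_with_models[of "{X, X'}"] by metis
  obtain \<phi> where sat_\<phi>: "\<And>Z. sat Z \<phi> \<longleftrightarrow> Z \<in> {X}"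
    by (rule exists_formula_with_models[of "{X}"]) blast
  obtain \<phi>' where sat_\<phi>': "\<And>Z. sat Z \<phi>' \<longleftrightarrow> Z \<in> {X'}"
    by (rule exists_formula_with_models[of "{X'}"]) blast
  define d where "d = hard_count F X' - hard_count F X"
  define m where "m = nat d"
  define m' where "m' = nat (- d)"
  define K where "K = size F + size G + 1"
  define H where "H = replicate_mset K (Hard, B) + replicate_mset m (Hard, \<phi>) + replicate_mset m' (Hard, \<phi>')"
  have Prob_H: "Prob (P + H) X =
    (if hard_count P X + m = hard_count P X' + m'
     then exp (soft_weight P X) / (exp (soft_weight P X) + exp (soft_weight P X'))
     else if hard_count P X + m > hard_count P X' + m' then 1 else 0)"
    if "size P < K" for P
    unfolding H_def add.assoc[symmetric]
    by (rule Prob_plus_two_point_bonus[OF False that sat_B stable_B sat_\<phi> sat_\<phi>'])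
  have balanced_F: "hard_count F X + m = hard_count F X' + m'"
    by (simp add: m_def m'_def d_def)
  let ?p = "exp (soft_weight F X) / (exp (soft_weight F X) + exp (soft_weight F X'))"
  have "0 < ?p" "?p < 1"
    by (simp_all add: add_pos_pos)
  moreover have "Prob (F + H) X = ?p"
    using Prob_H[of F] balanced_F by (simp add: K_def)
  moreover have "Prob (F + H) X = Prob (G + H) X"
    using SE by (simp add: strongly_equivalent_def)
  ultimately have balanced_G: "hard_count G X + m = hard_count G X' + m'"
    and "?p = exp (soft_weight G X) / (exp (soft_weight G X) + exp (soft_weight G X'))"
    using Prob_H[of G] by (auto simp: K_def split: if_splits)
  from this(2) have "soft_weight F X - soft_weight F X' = soft_weight G X - soft_weight G X'"
    by (rule diff_eq_if_exp_ratio_eq)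
  with balanced_F balanced_G show ?thesis
    by (simp add: wmult_def prod_eq_iff algebra_simps)
qed simp

theorem theorem1:
  fixes F G :: "('a::finite) program"
  shows "strongly_equivalent F G \<longleftrightarrow>
    (\<exists>c :: wexpr. \<forall>X :: 'a set.
        TW (sat_part F X) = wmult c (TW (sat_part G X)) \<and>
        classically_equivalent (reduct_set X (unweighted (sat_part F X)))
                               (reduct_set X (unweighted (sat_part G X))))"
proof
  assume SE: "strongly_equivalent F G"
  define c where "c = (soft_weight F {} - soft_weight G {}, hard_count F {} - hard_count G {})"
  have "TW (sat_part F X) = wmult c (TW (sat_part G X))" for X
    using TW_cross_eq_if_strongly_equivalent[OF SE, of X "{}"]
    by (simp add: c_def wmult_def prod_eq_iff algebra_simps)
  then show "\<exists>c. \<forall>X. TW (sat_part F X) = wmult c (TW (sat_part G X)) \<and>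
                     classically_equivalent (program_reduct F X) (program_reduct G X)"
    using program_reducts_equivalent_if_strongly_equivalent[OF SE] by blast
next
  assume "\<exists>c. \<forall>X. TW (sat_part F X) = wmult c (TW (sat_part G X)) \<and>
                  classically_equivalent (program_reduct F X) (program_reduct G X)"
  then show "strongly_equivalent F G"
    using strongly_equivalent_if_TW_and_reducts_agree by blast
qed

end
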